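(* Let $\Sigma=\{\sigma_{\mathbf{a}|\mathbf{x}}\}$ be a no-signaling assemblage on $\mathbb{C}^d$ and let $R_{\mathbf{a}|\mathbf{x}}$ denote the orthogonal projection onto $\mathrm{Im}(\sigma_{\mathbf{a}|\mathbf{x}})$. Then an LHS part can be subtracted from $\Sigma$ if and only if there exists a local deterministic box $L$ such that $\det\big(\prod_{\mathbf{a}|\mathbf{x}\in I_L}R_{\mathbf{a}|\mathbf{x}}-\mathbb{1}\big)=0$ (the product taken in any fixed order).
   Context: Fix $n\ge 1$, integers $\mathcal{A}_i,\mathcal{X}_i\ge 1$ and $d\ge1$; write $\mathbf{a}|\mathbf{x}=a_1\dots a_n|x_1\dots x_n$ with $a_i\in\{0,\dots,\mathcal{A}_i-1\}$, $x_i\in\{0,\dots,\mathcal{X}_i-1\}$. A no-signaling assemblage is a collection of positive semidefinite operators $\sigma_{\mathbf{a}|\mathbf{x}}$ on $\mathbb{C}^d$ with $\sum_{\mathbf{a}}\sigma_{\mathbf{a}|\mathbf{x}}=\rho_B$ for all $\mathbf{x}$ ($\rho_B$ a fixed density operator) and such that for every $I=\{i_1,\dots,i_s\}\subset\{1,\dots,n\}$, $1\le s<n$, the sum $\sum_{a_j:\,j\notin I}\sigma_{\mathbf{a}|\mathbf{x}}$ depends only on $a_{i_k},x_{i_k}$ ($k=1,\dots,s$). A local deterministic box $L$ is given by functions $f_i:\{0,\dots,\mathcal{X}_i-1\}\to\{0,\dots,\mathcal{A}_i-1\}$ via $p_L(\mathbf{a}|\mathbf{x})=\prod_i\delta_{a_i,f_i(x_i)}$;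 $I_L=\{\mathbf{a}|\mathbf{x}:p_L(\mathbf{a}|\mathbf{x})\ne0\}$. "An LHS part can be subtracted from $\Sigma$" means: there exist $\epsilon>0$, a unit vector $|\psi\rangle\in\mathbb{C}^d$ and a local deterministic box $L$ such that $\sigma_{\mathbf{a}|\mathbf{x}}-\epsilon\, p_L(\mathbf{a}|\mathbf{x})|\psi\rangle\langle\psi|\ge0$ for all $\mathbf{a}|\mathbf{x}$. *)

theory Defs
  imports "Jordan_Normal_Form.Schur_Decomposition" "Jordan_Normal_Form.Determinant"
begin

definition psd :: "nat \<Rightarrow> complex mat \<Rightarrow> bool" where
  "psd d M \<longleftrightarrow> M \<in> carrier_mat d d \<and> mat_adjoint M = M \<and>
     (\<forall>v \<in> carrier_vec d. Im ((M *\<^sub>v v) \<bullet>c v) = 0 \<and> Re ((M *\<^sub>v v) \<bullet>c v) \<ge> 0)"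

definition mtrace :: "complex mat \<Rightarrow> complex" where
  "mtrace M = (\<Sum>i<dim_row M. M $$ (i,i))"

definition density_op :: "nat \<Rightarrow> complex mat \<Rightarrow> bool" where
  "density_op d M \<longleftrightarrow> psd d M \<and> mtrace M = 1"

definition mat_image :: "nat \<Rightarrow> complex mat \<Rightarrow> complex vec set" where
  "mat_image d M = {M *\<^sub>v v | v. v \<in> carrier_vec d}"

definition orth_proj_onto_image :: "nat \<Rightarrow> complex mat \<Rightarrow> complex mat \<Rightarrow> bool" where
  "orth_proj_onto_image d M P \<longleftrightarrow> P \<in> carrier_mat d d \<and> P * P = P \<and>
     mat_adjoint P = P \<and> mat_image d P = mat_image d M"

definition outer :: "nat \<Rightarrow> complex vec \<Rightarrow> complex mat" where
  "outer d psi = mat d d (\<lambda>(i,j). psi $ i * cnj (psi $ j))"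

definition msum :: "nat \<Rightarrow> ('i \<Rightarrow> complex mat) \<Rightarrow> 'i set \<Rightarrow> complex mat" where
  "msum d F S = mat d d (\<lambda>(i,j). \<Sum>s\<in>S. F s $$ (i,j))"

(* index strings a = a_1..a_n (0-based: positions 0..n-1) with entries below bounds B *)
definition valid_idx :: "nat \<Rightarrow> (nat \<Rightarrow> nat) \<Rightarrow> nat list \<Rightarrow> bool" where
  "valid_idx n B a \<longleftrightarrow> length a = n \<and> (\<forall>i<n. a ! i < B i)"

definition no_signaling_assemblage ::
  "nat \<Rightarrow> (nat \<Rightarrow> nat) \<Rightarrow> (nat \<Rightarrow> nat) \<Rightarrow> nat \<Rightarrow> (nat list \<Rightarrow> nat list \<Rightarrow> complex mat) \<Rightarrow> bool" where
  "no_signaling_assemblage n A X d \<sigma> \<longleftrightarrow>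
     (\<forall>a x. valid_idx n A a \<longrightarrow> valid_idx n X x \<longrightarrow> psd d (\<sigma> a x)) \<and>
     (\<exists>\<rho>. density_op d \<rho> \<and>
        (\<forall>x. valid_idx n X x \<longrightarrow> msum d (\<lambda>a. \<sigma> a x) {a. valid_idx n A a} = \<rho>)) \<and>
     (\<forall>I. I \<subseteq> {0..<n} \<longrightarrow> 1 \<le> card I \<longrightarrow> card I < n \<longrightarrow>
        (\<forall>a x a' x'. valid_idx n A a \<longrightarrow> valid_idx n X x \<longrightarrow>
                    valid_idx n A a' \<longrightarrow> valid_idx n X x' \<longrightarrow>
                    (\<forall>i\<in>I. a ! i = a' ! i \<and> x ! i = x' ! i) \<longrightarrow>
           msum d (\<lambda>b. \<sigma> b x) {b. valid_idx n A b \<and> (\<forall>i\<in>I. b ! i = a ! i)} =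
           msum d (\<lambda>b. \<sigma> b x') {b. valid_idx n A b \<and> (\<forall>i\<in>I. b ! i = a' ! i)}))"

(* local deterministic box given by f i : {0..<X i} -> {0..<A i} *)
definition local_det :: "nat \<Rightarrow> (nat \<Rightarrow> nat) \<Rightarrow> (nat \<Rightarrow> nat) \<Rightarrow> (nat \<Rightarrow> nat \<Rightarrow> nat) \<Rightarrow> bool" where
  "local_det n A X f \<longleftrightarrow> (\<forall>i<n. \<forall>xi<X i. f i xi < A i)"

definition p_L :: "nat \<Rightarrow> (nat \<Rightarrow> nat \<Rightarrow> nat) \<Rightarrow> nat list \<Rightarrow> nat list \<Rightarrow> complex" where
  "p_L n f a x = (if \<forall>i<n. a ! i = f i (x ! i) then 1 else 0)"

definition I_L :: "nat \<Rightarrow> (nat \<Rightarrow> nat) \<Rightarrow> (nat \<Rightarrow> nat) \<Rightarrow> (nat \<Rightarrow> nat \<Rightarrow> nat) \<Rightarrow> (nat list \<times> nat list) set" where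
  "I_L n A X f = {(a,x). valid_idx n A a \<and> valid_idx n X x \<and> p_L n f a x \<noteq> 0}"

definition LHS_subtractable ::
  "nat \<Rightarrow> (nat \<Rightarrow> nat) \<Rightarrow> (nat \<Rightarrow> nat) \<Rightarrow> nat \<Rightarrow> (nat list \<Rightarrow> nat list \<Rightarrow> complex mat) \<Rightarrow> bool" where
  "LHS_subtractable n A X d \<sigma> \<longleftrightarrow>
     (\<exists>\<epsilon>::real. \<epsilon> > 0 \<and> (\<exists>psi \<in> carrier_vec d. psi \<bullet>c psi = 1 \<and>
       (\<exists>f. local_det n A X f \<and>
          (\<forall>a x. valid_idx n A a \<longrightarrow> valid_idx n X x \<longrightarrow>
              psd d (\<sigma> a x - (complex_of_real \<epsilon> * p_L n f a x) \<cdot>\<^sub>m outer d psi)))))"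

definition mprod_list :: "nat \<Rightarrow> complex mat list \<Rightarrow> complex mat" where
  "mprod_list d Ms = foldr (\<lambda>M P. M * P) Ms (1\<^sub>m d)"

end

theory Submission
  imports Defs
begin

text \<open>
  For a positive semidefinite \<open>S\<close> and a unit vector \<open>\<psi>\<close>, some \<open>S - \<epsilon>|\<psi>\<rangle>\<langle>\<psi>|\<close>
  with \<open>\<epsilon> > 0\<close> is positive semidefinite iff \<open>\<psi>\<close> lies in the image of \<open>S\<close>. If
  \<open>\<psi> = S w\<close>, Cauchy-Schwarz for the form of \<open>S\<close> gives
  \<open>|\<langle>v,\<psi>\<rangle>|\<^sup>2 \<le> \<langle>S v,v\<rangle> \<langle>S w,w\<rangle>\<close>, so every \<open>\<epsilon> < 1 / (\<langle>S w,w\<rangle> + 1)\<close> works.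
  Conversely, the component \<open>u\<close> of \<open>\<psi>\<close> orthogonal to the image lies in the kernel
  of \<open>S\<close>, and the form of \<open>S - \<epsilon>|\<psi>\<rangle>\<langle>\<psi>|\<close> at \<open>u\<close> is \<open>-\<epsilon>|u|\<^sup>4\<close>.
  Since \<open>I\<^sub>L\<close> is finite, one \<open>\<epsilon>\<close> serves all \<open>\<sigma>\<^sub>a\<^sub>|\<^sub>x\<close> at once, so an LHS part
  with box \<open>L\<close> can be subtracted iff the projections \<open>R\<^sub>a\<^sub>|\<^sub>x\<close>, \<open>a|x \<in> I\<^sub>L\<close>, have
  a common unit fixed vector. Finally, orthogonal projections do not increase norms and
  fix exactly the vectors whose norm they preserve, so their product fixes \<open>v\<close> iff
  every factor does; hence \<open>\<Prod>R - 1\<close> is singular iff such a common fixed vector exists.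
\<close>

lemma cscalar_prod_add_left:
  "u \<in> carrier_vec n \<Longrightarrow> v \<in> carrier_vec n \<Longrightarrow> w \<in> carrier_vec n \<Longrightarrow>
   (u + v) \<bullet>c w = u \<bullet>c w + v \<bullet>c (w :: complex vec)"
  by (simp add: add_scalar_prod_distrib[of _ n])

lemma cscalar_prod_diff_left:
  "u \<in> carrier_vec n \<Longrightarrow> v \<in> carrier_vec n \<Longrightarrow> w \<in> carrier_vec n \<Longrightarrow>
   (u - v) \<bullet>c w = u \<bullet>c w - v \<bullet>c (w :: complex vec)"
  by (simp add: minus_scalar_prod_distrib[of _ n])

lemma cscalar_prod_add_right:
  "u \<in> carrier_vec n \<Longrightarrow> v \<in> carrier_vec n \<Longrightarrow> w \<in> carrier_vec n \<Longrightarrow>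
   u \<bullet>c (v + w) = u \<bullet>c v + u \<bullet>c (w :: complex vec)"
  by (simp add: conjugate_add_vec[of _ n] scalar_prod_add_distrib[of _ n])

lemma cscalar_prod_smult_right:
  "u \<in> carrier_vec n \<Longrightarrow> w \<in> carrier_vec n \<Longrightarrow> u \<bullet>c (k \<cdot>\<^sub>v w) = cnj k * (u \<bullet>c (w :: complex vec))"
  by (simp add: conjugate_smult_vec)

lemma cscalar_prod_swap:
  assumes "u \<in> carrier_vec n" and "w \<in> carrier_vec n"
  shows "u \<bullet>c w = cnj (w \<bullet>c (u :: complex vec))"
proof -
  have "cnj (w \<bullet>c u) = conjugate w \<bullet> u"
    using conjugate_sprod_vec[of w n "conjugate u"] assms by simp
  also have "\<dots> = u \<bullet>c w"
    using conjugate_vec_sprod_comm[OF assms] by simp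
  finally show ?thesis by simp
qed

lemma cscalar_prod_diff_right:
  assumes "u \<in> carrier_vec n" and "v \<in> carrier_vec n" and "w \<in> carrier_vec n"
  shows "u \<bullet>c (v - w) = u \<bullet>c v - u \<bullet>c (w :: complex vec)"
proof -
  have "u \<bullet>c (v - w) = cnj ((v - w) \<bullet>c u)"
    using assms by (intro cscalar_prod_swap[of _ n]) auto
  also have "\<dots> = u \<bullet>c v - u \<bullet>c w"
    using assms by (simp add: cscalar_prod_diff_left[of _ n] cscalar_prod_swap[of u n])
  finally show ?thesis .
qed

lemma cscalar_prod_self_real: "v \<bullet>c v = of_real (Re (v \<bullet>c (v :: complex vec)))"
  using conjugate_square_ge_0_vec[of v] by (simp add: complex_eq_iff less_eq_complex_def)

lemma Re_cscalar_prod_self_ge_0: "Re (v \<bullet>c (v :: complex vec)) \<ge> 0"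
  using conjugate_square_ge_0_vec[of v] by (simp add: less_eq_complex_def)

lemma Re_cscalar_prod_self_eq_0_iff:
  "(v :: complex vec) \<in> carrier_vec n \<Longrightarrow> Re (v \<bullet>c v) = 0 \<longleftrightarrow> v = 0\<^sub>v n"
  by (metis conjugate_square_eq_0_vec cscalar_prod_self_real of_real_0 zero_complex.sel(1))

lemma diff_eq_0_vec_imp_eq:
  "(x :: complex vec) \<in> carrier_vec n \<Longrightarrow> y \<in> carrier_vec n \<Longrightarrow> x - y = 0\<^sub>v n \<Longrightarrow> x = y"
  by (metis index_minus_vec(1) index_zero_vec(1) carrier_vecD eq_vecI eq_iff_diff_eq_0)

lemma index_mat_adjoint:
  "M \<in> carrier_mat n n \<Longrightarrow> i < n \<Longrightarrow> j < n \<Longrightarrow> mat_adjoint M $$ (i,j) = cnj (M $$ (j,i))"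
  unfolding mat_adjoint_def by (auto simp: mat_of_rows_def)

lemma mat_adjoint_carrier: "M \<in> carrier_mat n n \<Longrightarrow> mat_adjoint M \<in> carrier_mat n n"
  unfolding mat_adjoint_def by auto

lemma mat_adjoint_cscalar_prod:
  assumes M: "(M :: complex mat) \<in> carrier_mat n n"
    and u: "u \<in> carrier_vec n" and w: "w \<in> carrier_vec n"
  shows "(M *\<^sub>v u) \<bullet>c w = u \<bullet>c (mat_adjoint M *\<^sub>v w)"
proof -
  have cprod: "x \<bullet>c y = (\<Sum>i<n. x $ i * cnj (y $ i))"
    if "x \<in> carrier_vec n" "y \<in> carrier_vec n" for x y :: "complex vec"
    using that by (auto simp: scalar_prod_def lessThan_atLeast0)
  have row: "row N i \<bullet> x = (\<Sum>j<n. N $$ (i,j) * x $ j)"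
    if "N \<in> carrier_mat n n" "x \<in> carrier_vec n" "i < n" for N :: "complex mat" and x i
    using that by (auto simp: scalar_prod_def row_def lessThan_atLeast0)
  have M': "mat_adjoint M \<in> carrier_mat n n"
    using M by (rule mat_adjoint_carrier)
  have "(M *\<^sub>v u) \<bullet>c w = (\<Sum>i<n. \<Sum>j<n. M $$ (i,j) * u $ j * cnj (w $ i))"
    using M u w by (simp add: cprod row sum_distrib_right)
  also have "\<dots> = (\<Sum>j<n. \<Sum>i<n. u $ j * cnj (mat_adjoint M $$ (j,i) * w $ i))"
    using M by (subst sum.swap) (auto intro!: sum.cong simp: index_mat_adjoint)
  also have "\<dots> = u \<bullet>c (mat_adjoint M *\<^sub>v w)"
    using M' u w by (simp add: cprod row sum_distrib_left)
  finally show ?thesis .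
qed

lemma hermitian_cscalar_prod:
  "(M :: complex mat) \<in> carrier_mat n n \<Longrightarrow> mat_adjoint M = M \<Longrightarrow>
   u \<in> carrier_vec n \<Longrightarrow> w \<in> carrier_vec n \<Longrightarrow> (M *\<^sub>v u) \<bullet>c w = u \<bullet>c (M *\<^sub>v w)"
  by (metis mat_adjoint_cscalar_prod)

section \<open>Orthogonal projections and their products\<close>

definition orth_proj :: "nat \<Rightarrow> complex mat \<Rightarrow> bool" where
  "orth_proj d P \<longleftrightarrow> P \<in> carrier_mat d d \<and> P * P = P \<and> mat_adjoint P = P"

lemma orth_proj_carrier: "orth_proj d P \<Longrightarrow> P \<in> carrier_mat d d"
  by (simp add: orth_proj_def)

lemma orth_proj_onto_image_imp_orth_proj: "orth_proj_onto_image d M P \<Longrightarrow> orth_proj d P"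
  by (simp add: orth_proj_onto_image_def orth_proj_def)

lemma orth_proj_idem_vec: "orth_proj d P \<Longrightarrow> v \<in> carrier_vec d \<Longrightarrow> P *\<^sub>v (P *\<^sub>v v) = P *\<^sub>v v"
  unfolding orth_proj_def by (metis assoc_mult_mat_vec)

lemma orth_proj_fixes_iff_image:
  assumes P: "orth_proj d P" and v: "v \<in> carrier_vec d"
  shows "P *\<^sub>v v = v \<longleftrightarrow> v \<in> mat_image d P"
proof
  assume "P *\<^sub>v v = v"
  then show "v \<in> mat_image d P"
    unfolding mat_image_def using v by (metis (mono_tags, lifting) mem_Collect_eq)
next
  assume "v \<in> mat_image d P"
  then obtain w where "w \<in> carrier_vec d" "v = P *\<^sub>v w"
    unfolding mat_image_def by auto
  then show "P *\<^sub>v v = v"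
    using orth_proj_idem_vec[OF P] by simp
qed

lemma orth_proj_pythagoras:
  assumes P: "orth_proj d P" and v: "v \<in> carrier_vec d"
  shows "Re (v \<bullet>c v) = Re ((P *\<^sub>v v) \<bullet>c (P *\<^sub>v v)) + Re ((v - P *\<^sub>v v) \<bullet>c (v - P *\<^sub>v v))"
proof -
  have Pc: "P \<in> carrier_mat d d" and herm: "mat_adjoint P = P"
    using P by (auto simp: orth_proj_def)
  define x where "x = P *\<^sub>v v"
  define u where "u = v - x"
  have x: "x \<in> carrier_vec d" and u: "u \<in> carrier_vec d"
    using Pc v by (auto simp: x_def u_def)
  have "x \<bullet>c x = v \<bullet>c (P *\<^sub>v x)"
    unfolding x_def using hermitian_cscalar_prod[OF Pc herm v] Pc v by simp
  also have "\<dots> = x \<bullet>c v"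
    unfolding x_def using orth_proj_idem_vec[OF P v] hermitian_cscalar_prod[OF Pc herm v v] by simp
  finally have xu: "x \<bullet>c u = 0"
    unfolding u_def using cscalar_prod_diff_right[OF x v x] by simp
  then have ux: "u \<bullet>c x = 0"
    using cscalar_prod_swap[OF u x] by simp
  have "v = x + u"
    unfolding u_def using x v by (intro eq_vecI) auto
  then have "v \<bullet>c v = x \<bullet>c x + x \<bullet>c u + (u \<bullet>c x + u \<bullet>c u)"
    using x u by (simp add: cscalar_prod_add_left[of _ d] cscalar_prod_add_right[of _ d])
  then show ?thesis
    using xu ux by (simp add: x_def u_def)
qed

lemma orth_proj_norm_le:
  "orth_proj d P \<Longrightarrow> v \<in> carrier_vec d \<Longrightarrow> Re ((P *\<^sub>v v) \<bullet>c (P *\<^sub>v v)) \<le> Re (v \<bullet>c v)"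
  using orth_proj_pythagoras Re_cscalar_prod_self_ge_0 by (metis le_add_same_cancel1)

lemma orth_proj_norm_eq_imp_fixes:
  assumes P: "orth_proj d P" and v: "v \<in> carrier_vec d"
    and eq: "Re ((P *\<^sub>v v) \<bullet>c (P *\<^sub>v v)) = Re (v \<bullet>c v)"
  shows "P *\<^sub>v v = v"
proof -
  have Pv: "P *\<^sub>v v \<in> carrier_vec d"
    using orth_proj_carrier[OF P] v by simp
  have "Re ((v - P *\<^sub>v v) \<bullet>c (v - P *\<^sub>v v)) = 0"
    using orth_proj_pythagoras[OF P v] eq by simp
  then have "v - P *\<^sub>v v = 0\<^sub>v d"
    using Re_cscalar_prod_self_eq_0_iff[of "v - P *\<^sub>v v" d] Pv v by simp
  then show ?thesis
    using diff_eq_0_vec_imp_eq[OF v Pv] by simp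
qed

lemma mprod_list_Nil [simp]: "mprod_list d [] = 1\<^sub>m d"
  by (simp add: mprod_list_def)

lemma mprod_list_Cons [simp]: "mprod_list d (M # Ms) = M * mprod_list d Ms"
  by (simp add: mprod_list_def)

lemma mprod_list_carrier: "\<forall>M\<in>set Ms. orth_proj d M \<Longrightarrow> mprod_list d Ms \<in> carrier_mat d d"
  by (induction Ms) (auto simp: orth_proj_def)

lemma mprod_list_Cons_mult_vec:
  "\<forall>M\<in>set (M # Ms). orth_proj d M \<Longrightarrow> v \<in> carrier_vec d \<Longrightarrow>
   mprod_list d (M # Ms) *\<^sub>v v = M *\<^sub>v (mprod_list d Ms *\<^sub>v v)"
  using mprod_list_carrier[of Ms d] orth_proj_carrier[of d M] by (simp add: assoc_mult_mat_vec)

lemma mprod_list_norm_le: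
  "\<forall>M\<in>set Ms. orth_proj d M \<Longrightarrow> v \<in> carrier_vec d \<Longrightarrow>
   Re ((mprod_list d Ms *\<^sub>v v) \<bullet>c (mprod_list d Ms *\<^sub>v v)) \<le> Re (v \<bullet>c v)"
proof (induction Ms)
  case Nil
  then show ?case by simp
next
  case (Cons M Ms)
  have "mprod_list d Ms *\<^sub>v v \<in> carrier_vec d"
    using mprod_list_carrier[of Ms d] Cons.prems by simp
  then show ?case
    using mprod_list_Cons_mult_vec[OF Cons.prems] orth_proj_norm_le[of d M] Cons
    by (metis list.set_intros(1) list.set_intros(2) order_trans)
qed

lemma mprod_list_fixes_iff:
  "\<forall>M\<in>set Ms. orth_proj d M \<Longrightarrow> v \<in> carrier_vec d \<Longrightarrow>
   mprod_list d Ms *\<^sub>v v = v \<longleftrightarrow> (\<forall>M\<in>set Ms. M *\<^sub>v v = v)"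
proof (induction Ms)
  case Nil
  then show ?case by simp
next
  case (Cons M Ms)
  have M: "orth_proj d M" and Ms: "\<forall>M\<in>set Ms. orth_proj d M"
    using Cons.prems by auto
  define w where "w = mprod_list d Ms *\<^sub>v v"
  have w: "w \<in> carrier_vec d"
    using mprod_list_carrier[OF Ms] Cons.prems by (simp add: w_def)
  have prod: "mprod_list d (M # Ms) *\<^sub>v v = M *\<^sub>v w"
    unfolding w_def using mprod_list_Cons_mult_vec[OF Cons.prems] .
  show ?case
  proof
    assume fixed: "mprod_list d (M # Ms) *\<^sub>v v = v"
    have "Re ((M *\<^sub>v w) \<bullet>c (M *\<^sub>v w)) = Re (w \<bullet>c w)"
      using orth_proj_norm_le[OF M w] mprod_list_norm_le[OF Ms Cons.prems(2)] fixed prod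
      by (simp add: w_def)
    then have "M *\<^sub>v w = w"
      using orth_proj_norm_eq_imp_fixes[OF M w] by simp
    then show "\<forall>M\<in>set (M # Ms). M *\<^sub>v v = v"
      using Cons.IH[OF Ms Cons.prems(2)] fixed prod by (simp add: w_def)
  next
    assume "\<forall>M\<in>set (M # Ms). M *\<^sub>v v = v"
    then show "mprod_list d (M # Ms) *\<^sub>v v = v"
      using Cons.IH[OF Ms Cons.prems(2)] prod by (simp add: w_def)
  qed
qed

definition has_common_unit_fixed_vector :: "nat \<Rightarrow> complex mat set \<Rightarrow> bool" where
  "has_common_unit_fixed_vector d Ms \<longleftrightarrow>
     (\<exists>\<psi>\<in>carrier_vec d. \<psi> \<bullet>c \<psi> = 1 \<and> (\<forall>M\<in>Ms. M *\<^sub>v \<psi> = \<psi>))"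

lemma exists_unit_multiple:
  assumes v: "(v :: complex vec) \<in> carrier_vec d" and nz: "v \<noteq> 0\<^sub>v d"
  shows "\<exists>k. (k \<cdot>\<^sub>v v) \<bullet>c (k \<cdot>\<^sub>v v) = 1"
proof -
  define r where "r = Re (v \<bullet>c v)"
  have r: "r > 0"
    using Re_cscalar_prod_self_ge_0[of v] Re_cscalar_prod_self_eq_0_iff[OF v] nz
    by (simp add: r_def)
  have vv: "v \<bullet>c v = of_real r"
    unfolding r_def by (rule cscalar_prod_self_real)
  define k where "k = complex_of_real (1 / sqrt r)"
  have "(k \<cdot>\<^sub>v v) \<bullet>c (k \<cdot>\<^sub>v v) = k * cnj k * of_real r"
    using v vv by (simp add: cscalar_prod_smult_right[of _ d] mult.assoc)
  also have "\<dots> = of_real ((1 / sqrt r) * (1 / sqrt r) * r)"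
    unfolding k_def by (simp only: complex_cnj_complex_of_real of_real_mult)
  also have "\<dots> = 1"
    using r by simp
  finally show ?thesis by blast
qed

lemma det_mprod_list_minus_one_eq_0_iff:
  assumes Ms: "\<forall>M\<in>set Ms. orth_proj d M"
  shows "det (mprod_list d Ms - 1\<^sub>m d) = 0 \<longleftrightarrow> has_common_unit_fixed_vector d (set Ms)"
proof -
  have P: "mprod_list d Ms \<in> carrier_mat d d"
    using mprod_list_carrier[OF Ms] .
  have kernel: "(mprod_list d Ms - 1\<^sub>m d) *\<^sub>v v = 0\<^sub>v d \<longleftrightarrow> (\<forall>M\<in>set Ms. M *\<^sub>v v = v)"
    if v: "v \<in> carrier_vec d" for v
  proof -
    have "(mprod_list d Ms - 1\<^sub>m d) *\<^sub>v v = mprod_list d Ms *\<^sub>v v - v"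
      using P v by (simp add: minus_mult_distrib_mat_vec[OF P _ v])
    then show ?thesis
      using diff_eq_0_vec_imp_eq[of "mprod_list d Ms *\<^sub>v v" d v] mprod_list_fixes_iff[OF Ms v] P v
      by auto
  qed
  have scale: "M *\<^sub>v (k \<cdot>\<^sub>v v) = k \<cdot>\<^sub>v v"
    if "M \<in> set Ms" "v \<in> carrier_vec d" "M *\<^sub>v v = v" for M v k
    using that Ms mult_mat_vec[of M d d v k] by (simp add: orth_proj_def)
  have "det (mprod_list d Ms - 1\<^sub>m d) = 0 \<longleftrightarrow>
        (\<exists>v\<in>carrier_vec d. v \<noteq> 0\<^sub>v d \<and> (\<forall>M\<in>set Ms. M *\<^sub>v v = v))"
    using P kernel by (subst det_0_iff_vec_prod_zero) auto
  also have "\<dots> \<longleftrightarrow> has_common_unit_fixed_vector d (set Ms)"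
  proof
    assume "\<exists>v\<in>carrier_vec d. v \<noteq> 0\<^sub>v d \<and> (\<forall>M\<in>set Ms. M *\<^sub>v v = v)"
    then obtain v where v: "v \<in> carrier_vec d" "v \<noteq> 0\<^sub>v d" "\<forall>M\<in>set Ms. M *\<^sub>v v = v"
      by blast
    obtain k where "(k \<cdot>\<^sub>v v) \<bullet>c (k \<cdot>\<^sub>v v) = 1"
      using exists_unit_multiple[OF v(1,2)] by blast
    then show "has_common_unit_fixed_vector d (set Ms)"
      unfolding has_common_unit_fixed_vector_def using v scale by (intro bexI[of _ "k \<cdot>\<^sub>v v"]) auto
  next
    assume "has_common_unit_fixed_vector d (set Ms)"
    then show "\<exists>v\<in>carrier_vec d. v \<noteq> 0\<^sub>v d \<and> (\<forall>M\<in>set Ms. M *\<^sub>v v = v)"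
      unfolding has_common_unit_fixed_vector_def by (metis conjugate_square_eq_0_vec zero_neq_one)
  qed
  finally show ?thesis .
qed

section \<open>Subtracting a rank-one operator from a positive semidefinite one\<close>

lemma outer_carrier [simp]: "outer d \<psi> \<in> carrier_mat d d"
  by (simp add: outer_def)

lemma outer_mult_vec:
  assumes \<psi>: "\<psi> \<in> carrier_vec d" and u: "u \<in> carrier_vec d"
  shows "outer d \<psi> *\<^sub>v u = (u \<bullet>c \<psi>) \<cdot>\<^sub>v \<psi>"
proof (rule eq_vecI)
  fix i
  assume "i < dim_vec ((u \<bullet>c \<psi>) \<cdot>\<^sub>v \<psi>)"
  then have i: "i < d"
    using \<psi> by simp
  have "(outer d \<psi> *\<^sub>v u) $ i = (\<Sum>j\<in>{0..<d}. \<psi> $ i * cnj (\<psi> $ j) * u $ j)"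
    using i u by (simp add: outer_def scalar_prod_def row_def)
  also have "\<dots> = \<psi> $ i * (\<Sum>j\<in>{0..<d}. u $ j * cnj (\<psi> $ j))"
    by (simp add: sum_distrib_left mult_ac)
  also have "\<dots> = ((u \<bullet>c \<psi>) \<cdot>\<^sub>v \<psi>) $ i"
    using i u \<psi> by (simp add: scalar_prod_def)
  finally show "(outer d \<psi> *\<^sub>v u) $ i = ((u \<bullet>c \<psi>) \<cdot>\<^sub>v \<psi>) $ i" .
qed (use \<psi> in \<open>auto simp: outer_def\<close>)

lemma smult_mat_mult_vec:
  "A \<in> carrier_mat n n \<Longrightarrow> v \<in> carrier_vec n \<Longrightarrow> (k \<cdot>\<^sub>m A) *\<^sub>v v = k \<cdot>\<^sub>v (A *\<^sub>v (v :: complex vec))"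
  by (intro eq_vecI) auto

lemma cscalar_prod_minus_outer:
  assumes S: "(S :: complex mat) \<in> carrier_mat d d" and \<psi>: "\<psi> \<in> carrier_vec d"
    and v: "v \<in> carrier_vec d"
  shows "((S - k \<cdot>\<^sub>m outer d \<psi>) *\<^sub>v v) \<bullet>c v = (S *\<^sub>v v) \<bullet>c v - k * of_real (cmod (v \<bullet>c \<psi>)^2)"
proof -
  have "(k \<cdot>\<^sub>m outer d \<psi>) *\<^sub>v v = (k * (v \<bullet>c \<psi>)) \<cdot>\<^sub>v \<psi>"
    using smult_mat_mult_vec[OF outer_carrier v] outer_mult_vec[OF \<psi> v] by (simp add: smult_smult_assoc)
  then have "(S - k \<cdot>\<^sub>m outer d \<psi>) *\<^sub>v v = S *\<^sub>v v - (k * (v \<bullet>c \<psi>)) \<cdot>\<^sub>v \<psi>"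
    using S v by (simp add: minus_mult_distrib_mat_vec[of _ d d])
  then have "((S - k \<cdot>\<^sub>m outer d \<psi>) *\<^sub>v v) \<bullet>c v = (S *\<^sub>v v) \<bullet>c v - k * (v \<bullet>c \<psi>) * (\<psi> \<bullet>c v)"
    using S v \<psi> by (simp add: cscalar_prod_diff_left[of _ d])
  then show ?thesis
    using cscalar_prod_swap[OF \<psi> v] by (simp add: complex_norm_square[symmetric] mult.assoc)
qed

lemma hermitian_minus_outer:
  assumes S: "(S :: complex mat) \<in> carrier_mat d d" and herm: "mat_adjoint S = S"
  shows "mat_adjoint (S - of_real e \<cdot>\<^sub>m outer d \<psi>) = S - of_real e \<cdot>\<^sub>m outer d \<psi>"
proof (rule eq_matI)
  fix i j
  assume "i < dim_row (S - of_real e \<cdot>\<^sub>m outer d \<psi>)" "j < dim_col (S - of_real e \<cdot>\<^sub>m outer d \<psi>)"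
  then have ij: "i < d" "j < d"
    using S by (auto simp: outer_def)
  have "S $$ (i,j) = cnj (S $$ (j,i))"
    using index_mat_adjoint[OF S ij] herm by simp
  then show "mat_adjoint (S - of_real e \<cdot>\<^sub>m outer d \<psi>) $$ (i,j) = (S - of_real e \<cdot>\<^sub>m outer d \<psi>) $$ (i,j)"
    using S ij by (subst index_mat_adjoint[of _ d]) (auto simp: outer_def)
qed (use S in \<open>auto simp: mat_adjoint_def outer_def\<close>)

lemma psd_hermitian: "psd d S \<Longrightarrow> S \<in> carrier_mat d d \<and> mat_adjoint S = S"
  by (simp add: psd_def)

lemma psd_form_real: "psd d S \<Longrightarrow> v \<in> carrier_vec d \<Longrightarrow> (S *\<^sub>v v) \<bullet>c v = of_real (Re ((S *\<^sub>v v) \<bullet>c v))"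
  by (simp add: psd_def complex_eq_iff)

lemma psd_form_nonneg: "psd d S \<Longrightarrow> v \<in> carrier_vec d \<Longrightarrow> Re ((S *\<^sub>v v) \<bullet>c v) \<ge> 0"
  by (simp add: psd_def)

lemma nonneg_quadratic_imp_le:
  fixes a b c :: real
  assumes q: "\<And>t. 0 \<le> a - 2 * t * b + t^2 * b * c" and b: "b \<ge> 0" and c: "c \<ge> 0"
  shows "b \<le> a * c"
proof (cases "b = 0")
  case True
  then show ?thesis
    using q[of 0] c by simp
next
  case False
  then have b: "b > 0"
    using b by simp
  show ?thesis
  proof (cases "c = 0")
    case True
    then show ?thesis
      using q[of "(a + 1) / (2 * b)"] b by (simp add: field_simps)
  next
    case False
    then have c: "c > 0"
      using c by simp
    have "0 \<le> a - 2 * (1 / c) * b + (1 / c)^2 * b * c"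
      by (rule q)
    also have "\<dots> = (a * c - b) / c"
      using c by (simp add: field_simps power2_eq_square)
    finally show ?thesis
      using c by (simp add: zero_le_divide_iff)
  qed
qed

lemma psd_cauchy_schwarz:
  assumes S: "psd d S" and v: "v \<in> carrier_vec d" and w: "w \<in> carrier_vec d"
  shows "cmod ((S *\<^sub>v v) \<bullet>c w)^2 \<le> Re ((S *\<^sub>v v) \<bullet>c v) * Re ((S *\<^sub>v w) \<bullet>c w)"
proof (rule nonneg_quadratic_imp_le)
  have Sc: "S \<in> carrier_mat d d" and herm: "mat_adjoint S = S"
    using psd_hermitian[OF S] by auto
  define \<beta> where "\<beta> = (S *\<^sub>v v) \<bullet>c w"
  define a where "a = Re ((S *\<^sub>v v) \<bullet>c v)"
  define c where "c = Re ((S *\<^sub>v w) \<bullet>c w)"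
  have Sv: "S *\<^sub>v v \<in> carrier_vec d" and Sw: "S *\<^sub>v w \<in> carrier_vec d"
    using Sc v w by auto
  have Swv: "(S *\<^sub>v w) \<bullet>c v = cnj \<beta>"
    unfolding \<beta>_def using hermitian_cscalar_prod[OF Sc herm w v] cscalar_prod_swap[OF w Sv] by simp
  fix t :: real
  define s where "s = of_real t * \<beta>"
  define z where "z = v - s \<cdot>\<^sub>v w"
  have z: "z \<in> carrier_vec d" and sw: "s \<cdot>\<^sub>v w \<in> carrier_vec d" and ssw: "s \<cdot>\<^sub>v (S *\<^sub>v w) \<in> carrier_vec d"
    using v w Sw by (auto simp: z_def)
  have "S *\<^sub>v z = S *\<^sub>v v - s \<cdot>\<^sub>v (S *\<^sub>v w)"
    unfolding z_def using mult_minus_distrib_mat_vec[OF Sc v sw] mult_mat_vec[OF Sc w] by simp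
  then have "(S *\<^sub>v z) \<bullet>c z =
      (S *\<^sub>v v) \<bullet>c v - (S *\<^sub>v v) \<bullet>c (s \<cdot>\<^sub>v w) - ((s \<cdot>\<^sub>v (S *\<^sub>v w)) \<bullet>c v - (s \<cdot>\<^sub>v (S *\<^sub>v w)) \<bullet>c (s \<cdot>\<^sub>v w))"
    unfolding z_def using Sv ssw v sw
    by (simp add: cscalar_prod_diff_left[of _ d] cscalar_prod_diff_right[of _ d])
  also have "\<dots> = of_real a - cnj s * \<beta> - s * cnj \<beta> + s * cnj s * of_real c"
    using Sv Sw v w Swv psd_form_real[OF S v] psd_form_real[OF S w]
    by (simp add: cscalar_prod_smult_right[of _ d] a_def c_def \<beta>_def algebra_simps)
  also have "\<dots> = of_real a - 2 * of_real t * (\<beta> * cnj \<beta>) + of_real t ^ 2 * (\<beta> * cnj \<beta>) * of_real c"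
    unfolding s_def by (simp add: algebra_simps power2_eq_square)
  also have "\<dots> = of_real (a - 2 * t * cmod \<beta>^2 + t^2 * cmod \<beta>^2 * c)"
    unfolding complex_norm_square[symmetric] by simp
  finally show "0 \<le> a - 2 * t * cmod \<beta>^2 + t^2 * cmod \<beta>^2 * c"
    using psd_form_nonneg[OF S z] by simp
qed (use psd_form_nonneg[OF S w] in auto)

text \<open>The kernel of a Hermitian matrix is the orthogonal complement of its image, and it
  contains \<open>\<psi> - R \<psi>\<close>.\<close>

lemma hermitian_mult_image_proj:
  assumes S: "(S :: complex mat) \<in> carrier_mat d d" and herm: "mat_adjoint S = S"
    and R: "orth_proj_onto_image d S R" and \<psi>: "\<psi> \<in> carrier_vec d"
  shows "S *\<^sub>v (R *\<^sub>v \<psi>) = S *\<^sub>v \<psi>"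
proof -
  have P: "orth_proj d R"
    using R by (rule orth_proj_onto_image_imp_orth_proj)
  have Rc: "R \<in> carrier_mat d d" and hermR: "mat_adjoint R = R"
    using P by (auto simp: orth_proj_def)
  have R\<psi>: "R *\<^sub>v \<psi> \<in> carrier_vec d"
    using Rc \<psi> by simp
  define x where "x = S *\<^sub>v (R *\<^sub>v \<psi>) - S *\<^sub>v \<psi>"
  have x: "x \<in> carrier_vec d" and Sx: "S *\<^sub>v x \<in> carrier_vec d"
    using S Rc \<psi> by (auto simp: x_def)
  have "S *\<^sub>v x \<in> mat_image d R"
    using R x unfolding orth_proj_onto_image_def mat_image_def by blast
  then have RSx: "R *\<^sub>v (S *\<^sub>v x) = S *\<^sub>v x"
    using orth_proj_fixes_iff_image[OF P Sx] by simp
  have "x \<bullet>c x = (S *\<^sub>v (R *\<^sub>v \<psi>)) \<bullet>c x - (S *\<^sub>v \<psi>) \<bullet>c x"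
    using cscalar_prod_diff_left[of "S *\<^sub>v (R *\<^sub>v \<psi>)" d "S *\<^sub>v \<psi>" x] S R\<psi> \<psi> x
    unfolding x_def[symmetric] by simp
  also have "\<dots> = \<psi> \<bullet>c (R *\<^sub>v (S *\<^sub>v x)) - \<psi> \<bullet>c (S *\<^sub>v x)"
    using hermitian_cscalar_prod[OF S herm R\<psi> x] hermitian_cscalar_prod[OF Rc hermR \<psi> Sx]
      hermitian_cscalar_prod[OF S herm \<psi> x] by simp
  also have "\<dots> = 0"
    using RSx by simp
  finally have "x = 0\<^sub>v d"
    using conjugate_square_eq_0_vec[OF x] by simp
  then show ?thesis
    using diff_eq_0_vec_imp_eq S R\<psi> \<psi> unfolding x_def by (metis mult_mat_vec_carrier)
qed

lemma psd_minus_outer_imp_fixes: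
  assumes S: "psd d S" and R: "orth_proj_onto_image d S R"
    and \<psi>: "\<psi> \<in> carrier_vec d" and e: "e > 0"
    and psd_diff: "psd d (S - of_real e \<cdot>\<^sub>m outer d \<psi>)"
  shows "R *\<^sub>v \<psi> = \<psi>"
proof -
  have Sc: "S \<in> carrier_mat d d" and herm: "mat_adjoint S = S"
    using psd_hermitian[OF S] by auto
  have P: "orth_proj d R"
    using R by (rule orth_proj_onto_image_imp_orth_proj)
  have Rc: "R \<in> carrier_mat d d" and hermR: "mat_adjoint R = R"
    using P by (auto simp: orth_proj_def)
  have R\<psi>: "R *\<^sub>v \<psi> \<in> carrier_vec d"
    using Rc \<psi> by simp
  define u where "u = \<psi> - R *\<^sub>v \<psi>"
  have u: "u \<in> carrier_vec d"
    using R\<psi> \<psi> by (simp add: u_def)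
  have Su: "S *\<^sub>v u = 0\<^sub>v d"
    unfolding u_def using hermitian_mult_image_proj[OF Sc herm R \<psi>] Sc \<psi> R\<psi>
    by (simp add: mult_minus_distrib_mat_vec[OF Sc \<psi> R\<psi>])
  have Ru: "R *\<^sub>v u = 0\<^sub>v d"
    unfolding u_def using orth_proj_idem_vec[OF P \<psi>] R\<psi>
    by (simp add: mult_minus_distrib_mat_vec[OF Rc \<psi> R\<psi>])
  have "\<psi> = u + R *\<^sub>v \<psi>"
    unfolding u_def using \<psi> Rc by (intro eq_vecI) auto
  then have "u \<bullet>c \<psi> = u \<bullet>c u + u \<bullet>c (R *\<^sub>v \<psi>)"
    using arg_cong[where f = "\<lambda>y. u \<bullet>c y"] cscalar_prod_add_right[OF u u R\<psi>] by metis
  also have "u \<bullet>c (R *\<^sub>v \<psi>) = 0"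
    using hermitian_cscalar_prod[OF Rc hermR u \<psi>] Ru \<psi> by simp
  finally have u\<psi>: "u \<bullet>c \<psi> = u \<bullet>c u"
    by simp
  have "0 \<le> Re (((S - of_real e \<cdot>\<^sub>m outer d \<psi>) *\<^sub>v u) \<bullet>c u)"
    using psd_form_nonneg[OF psd_diff u] .
  also have "\<dots> = - e * cmod (u \<bullet>c u)^2"
    using cscalar_prod_minus_outer[OF Sc \<psi> u] Su u u\<psi> by simp
  finally have "u \<bullet>c u = 0"
    using e by (simp add: mult_le_0_iff)
  then show ?thesis
    using diff_eq_0_vec_imp_eq[OF \<psi> R\<psi>] u by (simp add: u_def)
qed

lemma psd_minus_outer_eventually:
  assumes S: "psd d S" and R: "orth_proj_onto_image d S R"
    and \<psi>: "\<psi> \<in> carrier_vec d" and fixed: "R *\<^sub>v \<psi> = \<psi>"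
  shows "\<forall>\<^sub>F e in at_right 0. psd d (S - of_real e \<cdot>\<^sub>m outer d \<psi>)"
proof -
  have Sc: "S \<in> carrier_mat d d" and herm: "mat_adjoint S = S"
    using psd_hermitian[OF S] by auto
  have "\<psi> \<in> mat_image d R"
    using orth_proj_fixes_iff_image[OF orth_proj_onto_image_imp_orth_proj[OF R] \<psi>] fixed by simp
  then obtain w where w: "w \<in> carrier_vec d" and \<psi>_eq: "\<psi> = S *\<^sub>v w"
    using R unfolding orth_proj_onto_image_def mat_image_def by auto
  define c where "c = Re ((S *\<^sub>v w) \<bullet>c w)"
  have c: "c \<ge> 0"
    unfolding c_def using psd_form_nonneg[OF S w] .
  have "psd d (S - of_real e \<cdot>\<^sub>m outer d \<psi>)" if e: "0 < e" "e < 1 / (c + 1)" for e :: real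
  proof -
    have ec: "e * c \<le> 1"
      using e c by (simp add: field_simps)
    show ?thesis
      unfolding psd_def
    proof (intro conjI ballI)
      show "S - of_real e \<cdot>\<^sub>m outer d \<psi> \<in> carrier_mat d d"
        by (simp add: minus_carrier_mat)
      show "mat_adjoint (S - of_real e \<cdot>\<^sub>m outer d \<psi>) = S - of_real e \<cdot>\<^sub>m outer d \<psi>"
        using hermitian_minus_outer[OF Sc herm] .
      fix v :: "complex vec"
      assume v: "v \<in> carrier_vec d"
      have "v \<bullet>c \<psi> = (S *\<^sub>v v) \<bullet>c w"
        unfolding \<psi>_eq using hermitian_cscalar_prod[OF Sc herm v w] by simp
      then have "e * cmod (v \<bullet>c \<psi>)^2 \<le> e * (Re ((S *\<^sub>v v) \<bullet>c v) * c)"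
        using psd_cauchy_schwarz[OF S v w] e by (simp add: c_def)
      also have "\<dots> \<le> Re ((S *\<^sub>v v) \<bullet>c v)"
        using ec psd_form_nonneg[OF S v] by (metis mult.assoc mult.commute mult_left_le)
      finally have nonneg: "Re ((S *\<^sub>v v) \<bullet>c v) - e * cmod (v \<bullet>c \<psi>)^2 \<ge> 0"
        by simp
      have form: "((S - of_real e \<cdot>\<^sub>m outer d \<psi>) *\<^sub>v v) \<bullet>c v =
          of_real (Re ((S *\<^sub>v v) \<bullet>c v) - e * cmod (v \<bullet>c \<psi>)^2)"
        using cscalar_prod_minus_outer[OF Sc \<psi> v] psd_form_real[OF S v] by simp
      show "Im (((S - of_real e \<cdot>\<^sub>m outer d \<psi>) *\<^sub>v v) \<bullet>c v) = 0"
        using form by simp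
      show "Re (((S - of_real e \<cdot>\<^sub>m outer d \<psi>) *\<^sub>v v) \<bullet>c v) \<ge> 0"
        using form nonneg by simp
    qed
  qed
  moreover have "1 / (c + 1) > 0"
    using c by simp
  ultimately show ?thesis
    unfolding eventually_at_right_field by blast
qed

lemma finite_valid_idx: "finite {a. valid_idx n B a}"
proof -
  let ?bound = "\<Sum>i<n. B i"
  have "{a. valid_idx n B a} \<subseteq> {xs. set xs \<subseteq> {..<?bound} \<and> length xs = n}"
  proof
    fix a
    assume "a \<in> {a. valid_idx n B a}"
    then have len: "length a = n" and bounded: "\<forall>i<n. a ! i < B i"
      by (auto simp: valid_idx_def)
    have "a ! i < ?bound" if "i < n" for i
      using bounded that member_le_sum[of i "{..<n}" B] by fastforce
    then show "a \<in> {xs. set xs \<subseteq> {..<?bound} \<and> length xs = n}"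
      using len by (auto simp: in_set_conv_nth)
  qed
  then show ?thesis
    using finite_lists_length_eq[of "{..<?bound}" n] finite_subset by blast
qed

lemma finite_I_L: "finite (I_L n A X f)"
proof (rule finite_subset)
  show "I_L n A X f \<subseteq> {a. valid_idx n A a} \<times> {x. valid_idx n X x}"
    by (auto simp: I_L_def)
qed (simp add: finite_valid_idx)

lemma LHS_subtractable_iff_common_unit_fixed_vector:
  assumes psd: "\<And>a x. valid_idx n A a \<Longrightarrow> valid_idx n X x \<Longrightarrow> psd d (\<sigma> a x)"
    and R: "\<And>a x. valid_idx n A a \<Longrightarrow> valid_idx n X x \<Longrightarrow> orth_proj_onto_image d (\<sigma> a x) (R a x)"
  shows "LHS_subtractable n A X d \<sigma> \<longleftrightarrow>
    (\<exists>f. local_det n A X f \<and> has_common_unit_fixed_vector d ((\<lambda>(a,x). R a x) ` I_L n A X f))"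
proof
  assume "LHS_subtractable n A X d \<sigma>"
  then obtain \<epsilon> :: real and \<psi> f where \<epsilon>: "\<epsilon> > 0" and \<psi>: "\<psi> \<in> carrier_vec d" "\<psi> \<bullet>c \<psi> = 1"
    and f: "local_det n A X f"
    and psd_diff: "\<And>a x. valid_idx n A a \<Longrightarrow> valid_idx n X x \<Longrightarrow>
        psd d (\<sigma> a x - (of_real \<epsilon> * p_L n f a x) \<cdot>\<^sub>m outer d \<psi>)"
    unfolding LHS_subtractable_def by blast
  have "R a x *\<^sub>v \<psi> = \<psi>" if "(a,x) \<in> I_L n A X f" for a x
  proof -
    from that have ax: "valid_idx n A a" "valid_idx n X x" and "p_L n f a x = 1"
      by (auto simp: I_L_def p_L_def split: if_splits)
    then have "psd d (\<sigma> a x - of_real \<epsilon> \<cdot>\<^sub>m outer d \<psi>)"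
      using psd_diff[OF ax] by simp
    then show ?thesis
      using psd_minus_outer_imp_fixes[OF psd[OF ax] R[OF ax] \<psi>(1) \<epsilon>] by blast
  qed
  then show "\<exists>f. local_det n A X f \<and> has_common_unit_fixed_vector d ((\<lambda>(a,x). R a x) ` I_L n A X f)"
    unfolding has_common_unit_fixed_vector_def using f \<psi> by fast
next
  assume "\<exists>f. local_det n A X f \<and> has_common_unit_fixed_vector d ((\<lambda>(a,x). R a x) ` I_L n A X f)"
  then obtain f \<psi> where f: "local_det n A X f" and \<psi>: "\<psi> \<in> carrier_vec d" "\<psi> \<bullet>c \<psi> = 1"
    and fixed: "\<And>a x. (a,x) \<in> I_L n A X f \<Longrightarrow> R a x *\<^sub>v \<psi> = \<psi>"
    unfolding has_common_unit_fixed_vector_def by fast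
  have "\<forall>\<^sub>F e in at_right 0. \<forall>(a,x) \<in> I_L n A X f. psd d (\<sigma> a x - of_real e \<cdot>\<^sub>m outer d \<psi>)"
    using finite_I_L
  proof (rule eventually_ball_finite, safe)
    fix a x
    assume ax_mem: "(a,x) \<in> I_L n A X f"
    then have ax: "valid_idx n A a" "valid_idx n X x"
      by (auto simp: I_L_def)
    show "\<forall>\<^sub>F e in at_right 0. psd d (\<sigma> a x - of_real e \<cdot>\<^sub>m outer d \<psi>)"
      using psd_minus_outer_eventually[OF psd[OF ax] R[OF ax] \<psi>(1) fixed[OF ax_mem]] .
  qed
  then obtain \<epsilon> :: real where \<epsilon>: "\<epsilon> > 0"
    and psd_diff: "\<And>a x. (a,x) \<in> I_L n A X f \<Longrightarrow> psd d (\<sigma> a x - of_real \<epsilon> \<cdot>\<^sub>m outer d \<psi>)"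
    using eventually_happens'[OF trivial_limit_at_right_real
        eventually_conj[OF eventually_at_right_less]] by blast
  have "psd d (\<sigma> a x - (of_real \<epsilon> * p_L n f a x) \<cdot>\<^sub>m outer d \<psi>)"
    if ax: "valid_idx n A a" "valid_idx n X x" for a x
  proof (cases "(a,x) \<in> I_L n A X f")
    case True
    then have "p_L n f a x = 1"
      by (simp add: I_L_def p_L_def split: if_splits)
    then show ?thesis
      using psd_diff[OF True] by simp
  next
    case False
    then have "p_L n f a x = 0"
      using ax by (simp add: I_L_def)
    moreover have "\<sigma> a x - 0 \<cdot>\<^sub>m outer d \<psi> = \<sigma> a x"
      using psd_hermitian[OF psd[OF ax]] by (intro eq_matI) (auto simp: outer_def)
    ultimately show ?thesis
      using psd[OF ax] by simp
  qed
  then show "LHS_subtractable n A X d \<sigma>"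
    unfolding LHS_subtractable_def using \<epsilon> \<psi> f by blast
qed

theorem lemma2:
  fixes n d :: nat and A X :: "nat \<Rightarrow> nat"
    and \<sigma> R :: "nat list \<Rightarrow> nat list \<Rightarrow> complex mat"
    and ord :: "(nat \<Rightarrow> nat \<Rightarrow> nat) \<Rightarrow> (nat list \<times> nat list) list"
  assumes "n \<ge> 1" and "d \<ge> 1"
    and "\<forall>i<n. A i \<ge> 1 \<and> X i \<ge> 1"
    and "no_signaling_assemblage n A X d \<sigma>"
    and "\<forall>a x. valid_idx n A a \<longrightarrow> valid_idx n X x \<longrightarrow> orth_proj_onto_image d (\<sigma> a x) (R a x)"
    and "\<forall>f. local_det n A X f \<longrightarrow> distinct (ord f) \<and> set (ord f) = I_L n A X f"
  shows "LHS_subtractable n A X d \<sigma> \<longleftrightarrow>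
    (\<exists>f. local_det n A X f \<and>
       det (mprod_list d (map (\<lambda>(a,x). R a x) (ord f)) - 1\<^sub>m d) = 0)"
proof -
  have psd: "\<And>a x. valid_idx n A a \<Longrightarrow> valid_idx n X x \<Longrightarrow> psd d (\<sigma> a x)"
    using assms(4) unfolding no_signaling_assemblage_def by blast
  have R: "\<And>a x. valid_idx n A a \<Longrightarrow> valid_idx n X x \<Longrightarrow> orth_proj_onto_image d (\<sigma> a x) (R a x)"
    using assms(5) by blast
  have "det (mprod_list d (map (\<lambda>(a,x). R a x) (ord f)) - 1\<^sub>m d) = 0 \<longleftrightarrow>
      has_common_unit_fixed_vector d ((\<lambda>(a,x). R a x) ` I_L n A X f)"
    if f: "local_det n A X f" for f
  proof -
    have set_ord: "set (map (\<lambda>(a,x). R a x) (ord f)) = (\<lambda>(a,x). R a x) ` I_L n A X f"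
      using assms(6) f by simp
    have "\<forall>M \<in> set (map (\<lambda>(a,x). R a x) (ord f)). orth_proj d M"
      unfolding set_ord by (auto simp: I_L_def intro: orth_proj_onto_image_imp_orth_proj[OF R])
    then show ?thesis
      using det_mprod_list_minus_one_eq_0_iff set_ord by metis
  qed
  then show ?thesis
    using LHS_subtractable_iff_common_unit_fixed_vector[of n A X d \<sigma> R, OF psd R] by blast
qed

end
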